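(* A family of structures $\mathfrak{K}$ is $\mathbf{co}$-learnable if and only if $\mathfrak{K}$ is a $\Sigma^{\mathrm{inf}}_1$-antichain, i.e., for any two distinct $\mathcal{A},\mathcal{B}\in\mathfrak{K}$ there are $\Sigma^{\mathrm{inf}}_1$ sentences $\varphi,\psi$ with $\mathcal{A}\models\varphi$, $\mathcal{B}\not\models\varphi$, $\mathcal{B}\models\psi$, $\mathcal{A}\not\models\psi$ (equivalently, the $\Sigma^{\mathrm{inf}}_1$-theories of members of $\mathfrak{K}$ are pairwise $\subseteq$-incomparable).
   Context: All structures are countable, have domain $\mathbb{N}$, are in a finite relational signature, and are identified with their atomic diagrams. A family of structures $\mathfrak{K}$ is a countable set of pairwise nonisomorphic such structures. For a structure $\mathcal{S}$ and $s\in\mathbb{N}$, $\mathcal{S}\restriction_s$ denotes the finite substructure with domain $\{0,\dots,s\}$. $\mathrm{LD}(\mathfrak{K})$ is the set of all structures with domain $\mathbb{N}$ isomorphic to some member of $\mathfrak{K}$. The hypothesis space is $\{\ulcorner\mathcal{A}\urcorner:\mathcal{A}\in\mathfrak{K}\}\cup\{?\}$ (pairwise distinct formal symbols); a learner is an arbitrary function $\mathbf{M}$ from $\{\mathcal{S}\restriction_s:\mathcal{S}\in\mathrm{LD}(\mathfrak{K}),s\in\mathbb{N}\}$ to the hypothesis space. $\mathfrak{K}$ is $\mathbf{co}$-learnable if there is a learner $\mathbf{M}$ such that for every $\mathcal{S}\in\mathrm{LD}(\mathfrak{K})$, $\{\mathbf{M}(\mathcal{S}\restriction_s):s\in\mathbb{N}\}\setminus\{?\}=\{\ulcorner\mathcal{B}\urcorner:\mathcal{B}\in\mathfrak{K},\mathcal{B}\neq\mathcal{A}\}$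 where $\mathcal{A}\in\mathfrak{K}$ is isomorphic to $\mathcal{S}$ (i.e., the only conjecture never output is the correct one). The $\Sigma^{\mathrm{inf}}_n$-theory of $\mathcal{A}$ is the set of $\Sigma^{\mathrm{inf}}_n$ sentences true in $\mathcal{A}$. Infinitary logic: $\Sigma^{\mathrm{inf}}_0=\Pi^{\mathrm{inf}}_0$ formulas are finitary quantifier-free formulas; a $\Sigma^{\mathrm{inf}}_\alpha$ formula is a countable disjunction $\bigvee_{i}\exists\bar y_i\,\psi_i$ with each $\psi_i\in\Pi^{\mathrm{inf}}_{\beta_i}$, $\beta_i<\alpha$; a $\Pi^{\mathrm{inf}}_\alpha$ formula is a countable conjunction $\bigwedge_i\forall\bar y_i\,\psi_i$ with each $\psi_i\in\Sigma^{\mathrm{inf}}_{\beta_i}$, $\beta_i<\alpha$ (free variables among a fixed finite tuple). *)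

theory Defs
  imports Main "HOL-Library.Countable_Set"
begin

text \<open>A finite relational signature is a list of arities: relation symbol i (for i < length sig)
has arity sig ! i. A structure with domain nat is identified with its atomic diagram:
a predicate R i xs, which must be False outside the signature.\<close>

type_synonym struc = "nat \<Rightarrow> nat list \<Rightarrow> bool"

definition wf_struc :: "nat list \<Rightarrow> struc \<Rightarrow> bool" where
  "wf_struc sig A \<longleftrightarrow> (\<forall>i xs. A i xs \<longrightarrow> i < length sig \<and> length xs = sig ! i)"

definition iso :: "struc \<Rightarrow> struc \<Rightarrow> bool" where
  "iso A B \<longleftrightarrow> (\<exists>f. bij f \<and> (\<forall>i xs. A i xs \<longleftrightarrow> B i (map f xs)))"

definition family :: "nat list \<Rightarrow> struc set \<Rightarrow> bool" where
  "family sig K \<longleftrightarrow> countable K \<and> (\<forall>A\<in>K. wf_struc sig A)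
     \<and> (\<forall>A\<in>K. \<forall>B\<in>K. A \<noteq> B \<longrightarrow> \<not> iso A B)"

definition LD :: "struc set \<Rightarrow> struc set" where
  "LD K = {S. \<exists>A\<in>K. iso S A}"

definition restr :: "struc \<Rightarrow> nat \<Rightarrow> nat \<times> struc" where
  "restr S s = (s, \<lambda>i xs. S i xs \<and> set xs \<subseteq> {0..s})"

text \<open>Hypotheses: Some A stands for the code of A, None for '?'.\<close>
definition co_learnable :: "nat list \<Rightarrow> struc set \<Rightarrow> bool" where
  "co_learnable sig K \<longleftrightarrow> (\<exists>M :: nat \<times> struc \<Rightarrow> struc option.
     (\<forall>x. M x \<in> insert None (Some ` K)) \<and>
     (\<forall>S\<in>LD K. \<forall>A\<in>K. iso S A \<longrightarrow>
        {M (restr S s) | s. True} - {None} = Some ` (K - {A})))"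

datatype qf = Atom nat "nat list" | Eq nat nat | Neg qf | Conj qf qf | Disj qf qf | Tru

fun qf_vars :: "qf \<Rightarrow> nat set" where
  "qf_vars (Atom i xs) = set xs"
| "qf_vars (Eq x y) = {x, y}"
| "qf_vars (Neg p) = qf_vars p"
| "qf_vars (Conj p q) = qf_vars p \<union> qf_vars q"
| "qf_vars (Disj p q) = qf_vars p \<union> qf_vars q"
| "qf_vars Tru = {}"

fun qf_wf :: "nat list \<Rightarrow> qf \<Rightarrow> bool" where
  "qf_wf sig (Atom i xs) \<longleftrightarrow> i < length sig \<and> length xs = sig ! i"
| "qf_wf sig (Eq x y) \<longleftrightarrow> True"
| "qf_wf sig (Neg p) \<longleftrightarrow> qf_wf sig p"
| "qf_wf sig (Conj p q) \<longleftrightarrow> qf_wf sig p \<and> qf_wf sig q"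
| "qf_wf sig (Disj p q) \<longleftrightarrow> qf_wf sig p \<and> qf_wf sig q"
| "qf_wf sig Tru \<longleftrightarrow> True"

fun qf_sat :: "struc \<Rightarrow> (nat \<Rightarrow> nat) \<Rightarrow> qf \<Rightarrow> bool" where
  "qf_sat A v (Atom i xs) \<longleftrightarrow> A i (map v xs)"
| "qf_sat A v (Eq x y) \<longleftrightarrow> v x = v y"
| "qf_sat A v (Neg p) \<longleftrightarrow> \<not> qf_sat A v p"
| "qf_sat A v (Conj p q) \<longleftrightarrow> qf_sat A v p \<and> qf_sat A v q"
| "qf_sat A v (Disj p q) \<longleftrightarrow> qf_sat A v p \<or> qf_sat A v q"
| "qf_sat A v Tru \<longleftrightarrow> True"

text \<open>A Sigma^inf_1 sentence: a countable disjunction of sentences \<exists>y_0..y_{n-1}. psi,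
 psi quantifier-free with variables among y_0..y_{n-1}; represented as a set of pairs (n, psi).\<close>
definition sigma1_sentence :: "nat list \<Rightarrow> (nat \<times> qf) set \<Rightarrow> bool" where
  "sigma1_sentence sig \<Phi> \<longleftrightarrow> countable \<Phi> \<and>
     (\<forall>(n, \<psi>)\<in>\<Phi>. qf_wf sig \<psi> \<and> qf_vars \<psi> \<subseteq> {..<n})"

definition sigma1_sat :: "struc \<Rightarrow> (nat \<times> qf) set \<Rightarrow> bool" where
  "sigma1_sat A \<Phi> \<longleftrightarrow> (\<exists>(n, \<psi>)\<in>\<Phi>. \<exists>v. qf_sat A v \<psi>)"

definition sigma1_antichain :: "nat list \<Rightarrow> struc set \<Rightarrow> bool" where
  "sigma1_antichain sig K \<longleftrightarrow> (\<forall>A\<in>K. \<forall>B\<in>K. A \<noteq> B \<longrightarrow>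
     (\<exists>\<phi> \<psi>. sigma1_sentence sig \<phi> \<and> sigma1_sentence sig \<psi> \<and>
        sigma1_sat A \<phi> \<and> \<not> sigma1_sat B \<phi> \<and> sigma1_sat B \<psi> \<and> \<not> sigma1_sat A \<psi>))"

end

theory Submission
  imports Defs
begin

text \<open>If a learner never conjectures A while reading a copy of A, it must conjecture every other
  B at some finite stage s of A itself; the atomic diagram of A on {0..s}, read as an existential
  sentence, then fails in B, since otherwise some copy of B would begin with exactly that finite
  piece and the learner would wrongly conjecture B on it. Conversely, given a separating
  existential sentence true in A and false in B, a learner may conjecture B at every stage
  where a witness of some existential sentence false in B has appeared: this happens eventually
  on copies of any A other than B, and never on copies of B.\<close>

lemma extend_inj_on_to_bij:
  fixes v :: "nat \<Rightarrow> nat"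
  assumes "finite A" and "inj_on v A"
  obtains f where "bij f" and "\<And>x. x \<in> A \<Longrightarrow> f x = v x"
proof -
  have "infinite (- A)" and "infinite (- v ` A)"
    using assms(1) by (simp_all add: Compl_eq_Diff_UNIV Diff_infinite_finite)
  then obtain e1 e2 :: "nat \<Rightarrow> nat"
    where "bij_betw e1 (- A) UNIV" and "bij_betw e2 (- v ` A) UNIV"
    by (metis countableE_infinite countableI_type)
  then obtain g where "bij_betw g (- A) (- v ` A)"
    by (meson bij_betw_inv_into bij_betw_trans)
  moreover have "bij_betw v A (v ` A)"
    using assms(2) by (simp add: bij_betw_def)
  ultimately have "bij_betw (\<lambda>x. if x \<in> A then v x else g x) (A \<union> - A) (v ` A \<union> - v ` A)"
    by (intro bij_betw_disjoint_Un) auto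
  then show thesis
    by (intro that[of "\<lambda>x. if x \<in> A then v x else g x"]) simp_all
qed

lemma iso_refl: "iso A A"
  unfolding iso_def by (intro exI[of _ id]) simp

lemma qf_sat_embedding:
  assumes "inj f" and "\<And>i xs. S i xs \<longleftrightarrow> B i (map f xs)"
  shows "qf_sat S v p \<longleftrightarrow> qf_sat B (f \<circ> v) p"
  using assms by (induction p) (auto simp: inj_eq)

lemma iso_ex_qf_sat_iff:
  assumes "iso S A"
  shows "(\<exists>v. qf_sat S v p) \<longleftrightarrow> (\<exists>v. qf_sat A v p)"
proof -
  obtain f where f: "bij f" and S_A: "\<And>i xs. S i xs \<longleftrightarrow> A i (map f xs)"
    using assms unfolding iso_def by blast
  have "qf_sat S (inv f \<circ> w) p \<longleftrightarrow> qf_sat A w p" for w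
    using qf_sat_embedding[of f S A, OF bij_is_inj[OF f] S_A] f
    by (simp add: comp_def bij_is_surj surj_f_inv_f)
  then show ?thesis
    using qf_sat_embedding[of f S A, OF bij_is_inj[OF f] S_A] by blast
qed

lemma qf_sat_restr:
  assumes "\<forall>x\<in>qf_vars p. v x \<le> s"
  shows "qf_sat (snd (restr S s)) v p \<longleftrightarrow> qf_sat S v p"
  using assms by (induction p) (auto simp: restr_def)

lemma finite_qf_vars: "finite (qf_vars p)"
  by (induction p) auto

definition conjs :: "qf list \<Rightarrow> qf" where
  "conjs ps = foldr Conj ps Tru"

lemma qf_sat_conjs: "qf_sat A v (conjs ps) \<longleftrightarrow> (\<forall>p\<in>set ps. qf_sat A v p)"
  unfolding conjs_def by (induction ps) auto

lemma qf_wf_conjs: "qf_wf sig (conjs ps) \<longleftrightarrow> (\<forall>p\<in>set ps. qf_wf sig p)"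
  unfolding conjs_def by (induction ps) auto

lemma qf_vars_conjs: "qf_vars (conjs ps) = (\<Union>p\<in>set ps. qf_vars p)"
  unfolding conjs_def by (induction ps) auto

definition literal :: "struc \<Rightarrow> nat \<Rightarrow> nat list \<Rightarrow> qf" where
  "literal A i xs = (if A i xs then Atom i xs else Neg (Atom i xs))"

lemma qf_sat_literal: "qf_sat B v (literal A i xs) \<longleftrightarrow> (B i (map v xs) \<longleftrightarrow> A i xs)"
  by (simp add: literal_def)

text \<open>The atomic diagram of A on {0..s}, with the variable x standing for the element x.\<close>
definition diagram :: "nat list \<Rightarrow> struc \<Rightarrow> nat \<Rightarrow> qf" where
  "diagram sig A s = Conj
     (conjs [literal A i xs. i \<leftarrow> [0..<length sig], xs \<leftarrow> List.n_lists (sig ! i) [0..<Suc s]])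
     (conjs [Neg (Eq x y). x \<leftarrow> [0..<Suc s], y \<leftarrow> [0..<Suc s], x \<noteq> y])"

lemma qf_sat_diagram:
  "qf_sat B v (diagram sig A s) \<longleftrightarrow>
     (\<forall>i<length sig. \<forall>xs. length xs = sig ! i \<and> set xs \<subseteq> {0..s} \<longrightarrow>
        (B i (map v xs) \<longleftrightarrow> A i xs))
     \<and> inj_on v {0..s}"
proof -
  have "{0..<Suc s} = {0..s}" by auto
  then show ?thesis
    unfolding diagram_def qf_sat.simps qf_sat_conjs set_concat set_map
    by (auto simp: qf_sat_literal set_n_lists inj_on_def simp del: upt_Suc)
qed

lemma qf_wf_diagram: "qf_wf sig (diagram sig A s)"
  by (auto simp: diagram_def qf_wf_conjs set_n_lists literal_def)

lemma qf_vars_diagram: "qf_vars (diagram sig A s) \<subseteq> {..<Suc s}"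
  by (auto simp: diagram_def qf_vars_conjs set_n_lists literal_def split: if_splits)

lemma copy_realizing_diagram:
  assumes "wf_struc sig A" and "wf_struc sig B" and "qf_sat B v (diagram sig A s)"
  obtains S where "iso S B" and "restr S s = restr A s"
proof -
  have agree: "B i (map v xs) \<longleftrightarrow> A i xs"
    if "i < length sig" "length xs = sig ! i" "set xs \<subseteq> {0..s}" for i xs
    using assms(3) that by (simp add: qf_sat_diagram)
  obtain f where f: "bij f" and f_v: "\<And>x. x \<in> {0..s} \<Longrightarrow> f x = v x"
    using assms(3) extend_inj_on_to_bij[of "{0..s}" v] by (auto simp: qf_sat_diagram)
  define S where "S i xs \<longleftrightarrow> B i (map f xs)" for i xs
  have "iso S B"
    unfolding iso_def S_def using f by blast
  moreover have "S i xs \<longleftrightarrow> A i xs" if "set xs \<subseteq> {0..s}" for i xs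
  proof -
    have "S i xs \<longleftrightarrow> B i (map v xs)"
      unfolding S_def using that f_v by (metis map_cong subsetD)
    moreover have "B i (map v xs) \<longleftrightarrow> A i xs"
    proof (cases "i < length sig \<and> length xs = sig ! i")
      case True
      then show ?thesis using agree that by blast
    next
      case False
      then show ?thesis using assms(1,2) unfolding wf_struc_def by (metis length_map)
    qed
    ultimately show ?thesis by simp
  qed
  then have "restr S s = restr A s"
    unfolding restr_def by (auto simp: fun_eq_iff)
  ultimately show thesis
    using that by blast
qed

definition sigma1_separates :: "nat list \<Rightarrow> struc \<Rightarrow> struc \<Rightarrow> bool" where
  "sigma1_separates sig A B \<longleftrightarrow>
     (\<exists>\<phi>. sigma1_sentence sig \<phi> \<and> sigma1_sat A \<phi> \<and> \<not> sigma1_sat B \<phi>)"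

lemma sigma1_antichain_iff_separates:
  "sigma1_antichain sig K \<longleftrightarrow> (\<forall>A\<in>K. \<forall>B\<in>K. A \<noteq> B \<longrightarrow> sigma1_separates sig A B)"
  unfolding sigma1_antichain_def sigma1_separates_def by metis

lemma sigma1_separatesE:
  assumes "sigma1_separates sig A B"
  obtains \<psi> v where "qf_sat A v \<psi>" and "\<nexists>w. qf_sat B w \<psi>"
  using assms unfolding sigma1_separates_def sigma1_sat_def by blast

lemma sigma1_separates_if_co_learnable:
  assumes "co_learnable sig K" and "\<forall>C\<in>K. wf_struc sig C"
    and "A \<in> K" and "B \<in> K" and "A \<noteq> B"
  shows "sigma1_separates sig A B"
proof -
  obtain M :: "nat \<times> struc \<Rightarrow> struc option"
    where M_spec: "\<forall>S\<in>LD K. \<forall>C\<in>K. iso S C \<longrightarrow>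
      {M (restr S s) | s. True} - {None} = Some ` (K - {C})"
    using assms(1) unfolding co_learnable_def by (elim exE conjE) (rule that)
  have M: "{M (restr S s) | s. True} - {None} = Some ` (K - {C})"
    if "S \<in> LD K" "C \<in> K" "iso S C" for S C
    using M_spec that by blast
  have "A \<in> LD K"
    using assms(3) iso_refl by (auto simp: LD_def)
  moreover have "Some B \<in> Some ` (K - {A})"
    using assms(4,5) by blast
  ultimately have "Some B \<in> {M (restr A s) | s. True}"
    using M[OF _ assms(3) iso_refl] by blast
  then obtain s where M_A: "M (restr A s) = Some B"
    by (auto simp: eq_commute)
  let ?\<phi> = "{(Suc s, diagram sig A s)}"
  have "\<not> sigma1_sat B ?\<phi>"
  proof
    assume "sigma1_sat B ?\<phi>"
    then obtain v where "qf_sat B v (diagram sig A s)"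
      by (auto simp: sigma1_sat_def)
    moreover have "wf_struc sig A" "wf_struc sig B"
      using assms(2-4) by auto
    ultimately obtain S where "iso S B" and S_A: "restr S s = restr A s"
      using copy_realizing_diagram by blast
    moreover have "S \<in> LD K"
      using \<open>iso S B\<close> assms(4) by (auto simp: LD_def)
    ultimately have "Some B \<notin> {M (restr S t) | t. True} - {None}"
      using M[OF _ assms(4)] by auto
    moreover have "Some B \<in> {M (restr S t) | t. True} - {None}"
      using M_A S_A by (auto intro!: exI[of _ s])
    ultimately show False
      by contradiction
  qed
  moreover have "sigma1_sat A ?\<phi>"
    by (auto simp: sigma1_sat_def qf_sat_diagram intro!: exI[of _ id])
  moreover have "sigma1_sentence sig ?\<phi>"
    using qf_wf_diagram qf_vars_diagram by (auto simp: sigma1_sentence_def)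
  ultimately show ?thesis
    unfolding sigma1_separates_def by blast
qed

definition refutes_within :: "nat \<Rightarrow> struc \<Rightarrow> struc \<Rightarrow> bool" where
  "refutes_within s R B \<longleftrightarrow>
     (\<exists>\<psi> v. (\<forall>x\<in>qf_vars \<psi>. v x \<le> s) \<and> qf_sat R v \<psi> \<and> (\<nexists>w. qf_sat B w \<psi>))"

lemma refutes_within_restr_imp_not_iso:
  assumes "refutes_within s (snd (restr S s)) B"
  shows "\<not> iso S B"
  using assms iso_ex_qf_sat_iff qf_sat_restr unfolding refutes_within_def by blast

lemma refutes_within_restr_eventually:
  assumes "sigma1_separates sig A B" and "iso S A"
  obtains t where "\<And>s. t \<le> s \<Longrightarrow> refutes_within s (snd (restr S s)) B"
proof -
  obtain \<psi> v where "qf_sat A v \<psi>" and B_\<psi>: "\<nexists>w. qf_sat B w \<psi>"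
    using assms(1) by (rule sigma1_separatesE)
  then obtain w where S_\<psi>: "qf_sat S w \<psi>"
    using iso_ex_qf_sat_iff[OF assms(2)] by blast
  define t where "t = Max (w ` qf_vars \<psi>)"
  have "w x \<le> s" if "t \<le> s" "x \<in> qf_vars \<psi>" for s x
    using that finite_qf_vars Max_ge[of "w ` qf_vars \<psi>"] unfolding t_def by fastforce
  then show thesis
    using that S_\<psi> B_\<psi> qf_sat_restr unfolding refutes_within_def by blast
qed

text \<open>The stage s is read as a pair (k, t), so that every member of K is examined at arbitrarily
  late stages; the test B \<in> K only matters for K = {}, where from_nat_into is junk.\<close>
definition refuting_learner :: "struc set \<Rightarrow> nat \<times> struc \<Rightarrow> struc option" where
  "refuting_learner K x =
     (let (s, R) = x; B = from_nat_into K (fst (prod_decode s))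
      in if B \<in> K \<and> refutes_within s R B then Some B else None)"

lemma co_learnable_if_sigma1_separated:
  assumes "countable K" and "\<forall>A\<in>K. \<forall>B\<in>K. A \<noteq> B \<longrightarrow> sigma1_separates sig A B"
  shows "co_learnable sig K"
  unfolding co_learnable_def
proof (intro exI conjI ballI impI allI)
  let ?M = "refuting_learner K"
  show "?M x \<in> insert None (Some ` K)" for x
    by (auto simp: refuting_learner_def Let_def split: prod.splits)
  fix S A assume "A \<in> K" and "iso S A"
  show "{?M (restr S s) | s. True} - {None} = Some ` (K - {A})"
  proof (intro equalityI subsetI)
    fix x assume "x \<in> {?M (restr S s) | s. True} - {None}"
    then obtain s B where "x = Some B" "B \<in> K" "refutes_within s (snd (restr S s)) B"
      by (auto simp: refuting_learner_def restr_def Let_def split: if_splits)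
    then show "x \<in> Some ` (K - {A})"
      using refutes_within_restr_imp_not_iso \<open>iso S A\<close> by blast
  next
    fix x assume "x \<in> Some ` (K - {A})"
    then obtain B where "x = Some B" "B \<in> K" "B \<noteq> A"
      by blast
    then obtain t where t: "\<And>s. t \<le> s \<Longrightarrow> refutes_within s (snd (restr S s)) B"
      using refutes_within_restr_eventually assms(2) \<open>A \<in> K\<close> \<open>iso S A\<close> by metis
    obtain k where "from_nat_into K k = B"
      using from_nat_into_surj[OF assms(1) \<open>B \<in> K\<close>] by blast
    then have "?M (restr S (prod_encode (k, t))) = Some B"
      using t[OF le_prod_encode_2] \<open>B \<in> K\<close> by (simp add: refuting_learner_def restr_def)
    then show "x \<in> {?M (restr S s) | s. True} - {None}"
      using \<open>x = Some B\<close> by (auto intro!: exI[of _ "prod_encode (k, t)"])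
  qed
qed

theorem mainTheorem4:
  assumes "family sig K"
  shows "co_learnable sig K \<longleftrightarrow> sigma1_antichain sig K"
proof
  assume "co_learnable sig K"
  then show "sigma1_antichain sig K"
    using assms sigma1_separates_if_co_learnable
    unfolding family_def sigma1_antichain_iff_separates by blast
next
  assume "sigma1_antichain sig K"
  then show "co_learnable sig K"
    using assms co_learnable_if_sigma1_separated
    unfolding family_def sigma1_antichain_iff_separates by blast
qed

end
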